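(* Let $S$ be a square-free semigroup, $D$ a division ring, and let $(\alpha,\xi),(\beta,\zeta)\in Z^2(S,D^* )$ be 2-cocycles. If $[\beta,\zeta]=[\alpha^{\phi},\xi^{\phi}]$ in the thin 2-cohomology for some $\phi\in\mathrm{Aut}(S)$, then $D^{\beta}_{\zeta}S\cong D^{\alpha}_{\xi}S$ as rings. Consequently, for each $(\alpha,\xi)\in Z^2(S,D^* )$ there exists a normal $(\beta,\zeta)\in Z^2(S,D^* )$ with $D^{\beta}_{\zeta}S\cong D^{\alpha}_{\xi}S$.
   Context: $D$ is a division ring, $D^*$ its group of units, $\mathrm{Aut}(D)$ its group of ring automorphisms, and for $d\in D^*$, $\rho_d\in\mathrm{Aut}(D)$ is $\rho_d(x)=dxd^{-1}$. A square-free semigroup is a semigroup $S$ (product written $s\cdot t$) with zero $\theta$ together with a finite set $E\subseteq S$ of nonzero pairwise orthogonal idempotents such that $S=\bigcup_{e,f\in E}e\cdot S\cdot f$ and $|e\cdot S\cdot f\setminus\{\theta\}|\le 1$ for all $e,f\in E$. Write $S^*=S\setminus\{\theta\}$; each $s\in S^*$ satisfies $s=e\cdot s\cdot f$ for unique $e,f\in E$. $\mathrm{Aut}(S)$ is the group of semigroup automorphisms of $S$. Put $S^{<0>}=E$ and $S^{<n>}=\{(s_1,\dots,s_n)\in S^n: s_1\cdot s_2\cdots s_n\neq\theta\}$ for $n>0$; for a group $G$, $F^n(S,G)$ is the group (under pointwise multiplication) of functions $S^{<n>}\to G$. For $\alpha\in F^1(S,\mathrm{Aut}(D))$ and $\mu\in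 F^0(S,\mathrm{Aut}(D))$ write $\alpha_s=\alpha(s)$, $\mu_e=\mu(e)$. A 2-cocycle is a pair $(\alpha,\xi)\in F^1(S,\mathrm{Aut}(D))\times F^2(S,D^* )$ with $\alpha_s(\xi(t,u))\,\xi(s,t\cdot u)=\xi(s,t)\,\xi(s\cdot t,u)$ for all $(s,t,u)\in S^{<3>}$ and $\alpha_s\circ\alpha_t=\rho_{\xi(s,t)}\circ\alpha_{s\cdot t}$ for all $(s,t)\in S^{<2>}$; $Z^2(S,D^* )$ is the set of 2-cocycles. A 2-cocycle is normal if $\alpha_e=1_D$ and $\xi(e,e)=1$ for all $e\in E$. The group $F^0(S,\mathrm{Aut}(D))\ltimes F^1(S,D^* )$ acts on $Z^2(S,D^* )$ by $(\mu,\eta)*(\alpha,\xi)=(\beta,\zeta)$ where, for $s=e\cdot s\cdot f$, $t=f\cdot t\cdot g$ in $S^*$ with $s\cdot t\ne\theta$: $\mu_e\circ\beta_s\circ\mu_f^{-1}=\rho_{\eta(s)}\circ\alpha_s$ and $\mu_e(\zeta(s,t))=\eta(s)\,\alpha_s(\eta(t))\,\xi(s,t)\,\eta(s\cdot t)^{-1}$. The orbits form the thin 2-cohomology; $[\alpha,\xi]$ denotes the orbit of $(\alpha,\xi)$. For $\phi\in\mathrm{Aut}(S)$ define $(\alpha^{\phi},\xi^{\phi})$ by $\alpha^{\phi}_s=\alpha_{\phi(s)}$ and $\xi^{\phi}(s,t)=\xi(\phi(s),\phi(t))$. For $(\alpha,\xi)\in Z^2(S,D^* )$, $D^{\alpha}_{\xi}S$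 is the ring which is the left $D$-vector space with basis $S^*$ and multiplication extended by distributivity from $(d_1s)(d_2t)=d_1\,\alpha_s(d_2)\,\xi(s,t)\,(s\cdot t)$ if $s\cdot t\neq\theta$ and $0$ otherwise ($d_1,d_2\in D$, $s,t\in S^*$); in particular $sd=\alpha_s(d)s$ and $st=\xi(s,t)\,s\cdot t$. *)

theory Defs
  imports Main
begin

definition square_free_semigroup ::
  "'s set \<Rightarrow> ('s \<Rightarrow> 's \<Rightarrow> 's) \<Rightarrow> 's \<Rightarrow> 's set \<Rightarrow> bool" where
  "square_free_semigroup S m \<theta> E \<longleftrightarrow>
     (\<forall>s\<in>S. \<forall>t\<in>S. m s t \<in> S) \<and>
     (\<forall>s\<in>S. \<forall>t\<in>S. \<forall>u\<in>S. m (m s t) u = m s (m t u)) \<and>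
     \<theta> \<in> S \<and> (\<forall>s\<in>S. m \<theta> s = \<theta> \<and> m s \<theta> = \<theta>) \<and>
     E \<subseteq> S \<and> finite E \<and>
     (\<forall>e\<in>E. e \<noteq> \<theta> \<and> m e e = e) \<and>
     (\<forall>e\<in>E. \<forall>f\<in>E. e \<noteq> f \<longrightarrow> m e f = \<theta>) \<and>
     S = (\<Union>e\<in>E. \<Union>f\<in>E. {m (m e x) f | x. x \<in> S}) \<and>
     (\<forall>e\<in>E. \<forall>f\<in>E. card ({m (m e x) f | x. x \<in> S} - {\<theta>}) \<le> 1 \<and>
                      finite ({m (m e x) f | x. x \<in> S} - {\<theta>}))"

definition semigroup_aut ::
  "'s set \<Rightarrow> ('s \<Rightarrow> 's \<Rightarrow> 's) \<Rightarrow> ('s \<Rightarrow> 's) \<Rightarrow> bool" where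
  "semigroup_aut S m \<phi> \<longleftrightarrow> bij_betw \<phi> S S \<and> (\<forall>s\<in>S. \<forall>t\<in>S. \<phi> (m s t) = m (\<phi> s) (\<phi> t))"

definition ring_aut :: "('d::division_ring \<Rightarrow> 'd) \<Rightarrow> bool" where
  "ring_aut \<sigma> \<longleftrightarrow> bij \<sigma> \<and> (\<forall>x y. \<sigma> (x + y) = \<sigma> x + \<sigma> y) \<and> (\<forall>x y. \<sigma> (x * y) = \<sigma> x * \<sigma> y)"

definition rho :: "'d::division_ring \<Rightarrow> 'd \<Rightarrow> 'd" where
  "rho d = (\<lambda>x. d * x * inverse d)"

(* 2-cocycles (alpha, xi) in Z^2(S, D^* ); alpha is relevant on S^<1> = S - {theta},
   xi on S^<2> *)
definition cocycle2 ::
  "'s set \<Rightarrow> ('s \<Rightarrow> 's \<Rightarrow> 's) \<Rightarrow> 's \<Rightarrow> ('s \<Rightarrow> 'd::division_ring \<Rightarrow> 'd) \<Rightarrow> ('s \<Rightarrow> 's \<Rightarrow> 'd) \<Rightarrow> bool" where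
  "cocycle2 S m \<theta> \<alpha> \<xi> \<longleftrightarrow>
     (\<forall>s\<in>S. s \<noteq> \<theta> \<longrightarrow> ring_aut (\<alpha> s)) \<and>
     (\<forall>s\<in>S. \<forall>t\<in>S. m s t \<noteq> \<theta> \<longrightarrow> \<xi> s t \<noteq> 0) \<and>
     (\<forall>s\<in>S. \<forall>t\<in>S. \<forall>u\<in>S. m (m s t) u \<noteq> \<theta> \<longrightarrow>
         \<alpha> s (\<xi> t u) * \<xi> s (m t u) = \<xi> s t * \<xi> (m s t) u) \<and>
     (\<forall>s\<in>S. \<forall>t\<in>S. m s t \<noteq> \<theta> \<longrightarrow> \<alpha> s \<circ> \<alpha> t = rho (\<xi> s t) \<circ> \<alpha> (m s t))"

definition normal_cocycle ::
  "'s set \<Rightarrow> ('s \<Rightarrow> 'd::division_ring \<Rightarrow> 'd) \<Rightarrow> ('s \<Rightarrow> 's \<Rightarrow> 'd) \<Rightarrow> bool" where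
  "normal_cocycle E \<alpha> \<xi> \<longleftrightarrow> (\<forall>e\<in>E. \<alpha> e = id \<and> \<xi> e e = 1)"

(* (mu, eta) * (alpha, xi) = (beta, zeta) *)
definition cohom_act ::
  "'s set \<Rightarrow> ('s \<Rightarrow> 's \<Rightarrow> 's) \<Rightarrow> 's \<Rightarrow> 's set \<Rightarrow>
   ('s \<Rightarrow> 'd::division_ring \<Rightarrow> 'd) \<Rightarrow> ('s \<Rightarrow> 'd) \<Rightarrow>
   ('s \<Rightarrow> 'd \<Rightarrow> 'd) \<Rightarrow> ('s \<Rightarrow> 's \<Rightarrow> 'd) \<Rightarrow>
   ('s \<Rightarrow> 'd \<Rightarrow> 'd) \<Rightarrow> ('s \<Rightarrow> 's \<Rightarrow> 'd) \<Rightarrow> bool" where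
  "cohom_act S m \<theta> E \<mu> \<eta> \<alpha> \<xi> \<beta> \<zeta> \<longleftrightarrow>
     (\<forall>e\<in>E. ring_aut (\<mu> e)) \<and>
     (\<forall>s\<in>S. s \<noteq> \<theta> \<longrightarrow> \<eta> s \<noteq> 0) \<and>
     (\<forall>s\<in>S. \<forall>e\<in>E. \<forall>f\<in>E. s \<noteq> \<theta> \<and> m (m e s) f = s \<longrightarrow>
         \<mu> e \<circ> \<beta> s \<circ> inv (\<mu> f) = rho (\<eta> s) \<circ> \<alpha> s) \<and>
     (\<forall>s\<in>S. \<forall>t\<in>S. \<forall>e\<in>E. \<forall>f\<in>E. \<forall>g\<in>E.
         m (m e s) f = s \<and> m (m f t) g = t \<and> s \<noteq> \<theta> \<and> t \<noteq> \<theta> \<and> m s t \<noteq> \<theta> \<longrightarrow>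
         \<mu> e (\<zeta> s t) = \<eta> s * \<alpha> s (\<eta> t) * \<xi> s t * inverse (\<eta> (m s t)))"

definition thin_cohomologous ::
  "'s set \<Rightarrow> ('s \<Rightarrow> 's \<Rightarrow> 's) \<Rightarrow> 's \<Rightarrow> 's set \<Rightarrow>
   ('s \<Rightarrow> 'd::division_ring \<Rightarrow> 'd) \<Rightarrow> ('s \<Rightarrow> 's \<Rightarrow> 'd) \<Rightarrow>
   ('s \<Rightarrow> 'd \<Rightarrow> 'd) \<Rightarrow> ('s \<Rightarrow> 's \<Rightarrow> 'd) \<Rightarrow> bool" where
  "thin_cohomologous S m \<theta> E \<beta> \<zeta> \<alpha> \<xi> \<longleftrightarrow>
     (\<exists>\<mu> \<eta>. cohom_act S m \<theta> E \<mu> \<eta> \<alpha> \<xi> \<beta> \<zeta>)"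

(* The ring D^alpha_xi S: elements are D-linear combinations of S^* = S - {theta},
   represented as coefficient functions vanishing off S^* (S is finite). *)
definition twisted_carrier :: "'s set \<Rightarrow> 's \<Rightarrow> ('s \<Rightarrow> 'd::division_ring) set" where
  "twisted_carrier S \<theta> = {x. \<forall>u. (u \<notin> S \<or> u = \<theta>) \<longrightarrow> x u = 0}"

definition twisted_add :: "('s \<Rightarrow> 'd::division_ring) \<Rightarrow> ('s \<Rightarrow> 'd) \<Rightarrow> ('s \<Rightarrow> 'd)" where
  "twisted_add x y = (\<lambda>u. x u + y u)"

definition twisted_mult ::
  "'s set \<Rightarrow> ('s \<Rightarrow> 's \<Rightarrow> 's) \<Rightarrow> 's \<Rightarrow> ('s \<Rightarrow> 'd::division_ring \<Rightarrow> 'd) \<Rightarrow> ('s \<Rightarrow> 's \<Rightarrow> 'd) \<Rightarrow>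
   ('s \<Rightarrow> 'd) \<Rightarrow> ('s \<Rightarrow> 'd) \<Rightarrow> ('s \<Rightarrow> 'd)" where
  "twisted_mult S m \<theta> \<alpha> \<xi> x y =
     (\<lambda>u. if u \<in> S \<and> u \<noteq> \<theta> then
        (\<Sum>s\<in>S - {\<theta>}. \<Sum>t\<in>S - {\<theta>}. if m s t = u then x s * \<alpha> s (y t) * \<xi> s t else 0)
      else 0)"

definition twisted_rings_iso ::
  "'s set \<Rightarrow> ('s \<Rightarrow> 's \<Rightarrow> 's) \<Rightarrow> 's \<Rightarrow>
   ('s \<Rightarrow> 'd::division_ring \<Rightarrow> 'd) \<Rightarrow> ('s \<Rightarrow> 's \<Rightarrow> 'd) \<Rightarrow>
   ('s \<Rightarrow> 'd \<Rightarrow> 'd) \<Rightarrow> ('s \<Rightarrow> 's \<Rightarrow> 'd) \<Rightarrow> bool" where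
  "twisted_rings_iso S m \<theta> \<beta> \<zeta> \<alpha> \<xi> \<longleftrightarrow>
     (\<exists>h. bij_betw h (twisted_carrier S \<theta>) (twisted_carrier S \<theta>) \<and>
        (\<forall>x\<in>twisted_carrier S \<theta>. \<forall>y\<in>twisted_carrier S \<theta>.
           h (twisted_add x y) = twisted_add (h x) (h y) \<and>
           h (twisted_mult S m \<theta> \<beta> \<zeta> x y) = twisted_mult S m \<theta> \<alpha> \<xi> (h x) (h y)))"

end

theory Submission
  imports Defs
begin

(* If (\<beta>, \<zeta>) is obtained
   from (\<alpha> \<circ> \<phi>, \<xi> \<circ> \<phi>) by the action of (\<mu>, \<eta>), rescale each coefficient: x u \<mapsto> \<mu>\<^sub>e (x u) * \<eta> u,
   where e is the left idempotent of u.  This is additive and bijective, and the two equations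
   defining the action say exactly that it is multiplicative on products of basis elements.
   Relabelling the basis along \<phi> then identifies the rings of (\<alpha> \<circ> \<phi>, \<xi> \<circ> \<phi>) and (\<alpha>, \<xi>).
   For the normal form, act by \<mu> = 1 and \<eta> e = inverse (\<xi> e e) on idempotents: the cocycle
   condition at (e, e) makes \<alpha>\<^sub>e conjugation by \<xi> e e, which this twist cancels. *)

lemma mult_inverse_cancel_left: "(a::'d::division_ring) \<noteq> 0 \<Longrightarrow> a * (inverse a * y) = y"
  by (simp add: mult.assoc[symmetric])

lemma inverse_mult_cancel_left: "(a::'d::division_ring) \<noteq> 0 \<Longrightarrow> inverse a * (a * y) = y"
  by (simp add: mult.assoc[symmetric])

lemma ring_aut_add: "ring_aut \<sigma> \<Longrightarrow> \<sigma> (x + y) = \<sigma> x + \<sigma> y"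
  unfolding ring_aut_def by blast

lemma ring_aut_mult: "ring_aut \<sigma> \<Longrightarrow> \<sigma> (x * y) = \<sigma> x * \<sigma> y"
  unfolding ring_aut_def by blast

lemma ring_aut_bij: "ring_aut \<sigma> \<Longrightarrow> bij \<sigma>"
  unfolding ring_aut_def by blast

lemma ring_aut_inv_apply: "ring_aut \<sigma> \<Longrightarrow> inv \<sigma> (\<sigma> x) = x"
  by (metis ring_aut_bij bij_is_inj inv_f_f)

lemma ring_aut_apply_inv: "ring_aut \<sigma> \<Longrightarrow> \<sigma> (inv \<sigma> x) = x"
  by (metis ring_aut_bij bij_is_surj surj_f_inv_f)

lemma ring_aut_zero: "ring_aut \<sigma> \<Longrightarrow> \<sigma> 0 = 0"
  using ring_aut_add[of \<sigma> 0 0] by simp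

lemma ring_aut_eq_zero_iff: "ring_aut \<sigma> \<Longrightarrow> \<sigma> x = 0 \<longleftrightarrow> x = 0"
  by (metis ring_aut_bij bij_is_inj inj_eq ring_aut_zero)

lemma ring_aut_one:
  assumes "ring_aut \<sigma>" shows "\<sigma> 1 = (1::'d::division_ring)"
  using ring_aut_mult[OF assms, of 1 "inv \<sigma> 1"] ring_aut_apply_inv[OF assms] by simp

lemma ring_aut_inverse:
  assumes \<sigma>: "ring_aut \<sigma>" shows "\<sigma> (inverse x) = inverse (\<sigma> (x::'d::division_ring))"
proof (cases "x = 0")
  case True then show ?thesis using ring_aut_zero[OF \<sigma>] by simp
next
  case False
  have "\<sigma> x * \<sigma> (inverse x) = 1"
    using ring_aut_mult[OF \<sigma>, of x "inverse x"] ring_aut_one[OF \<sigma>] False by simp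
  then show ?thesis by (rule inverse_unique[symmetric])
qed

lemma ring_aut_sum:
  assumes \<sigma>: "ring_aut \<sigma>" shows "\<sigma> (sum f A) = (\<Sum>x\<in>A. \<sigma> (f x))"
proof (cases "finite A")
  case True then show ?thesis
    by (induction A rule: finite_induct) (simp_all add: ring_aut_zero[OF \<sigma>] ring_aut_add[OF \<sigma>])
qed (simp add: ring_aut_zero[OF \<sigma>])

lemma ring_aut_id: "ring_aut id"
  unfolding ring_aut_def by simp

lemma ring_aut_rho_comp:
  assumes \<sigma>: "ring_aut \<sigma>" and d: "(d::'d::division_ring) \<noteq> 0"
  shows "ring_aut (rho d \<circ> \<sigma>)"
proof -
  have "bij (rho d \<circ> \<sigma>)"
  proof (rule bij_betw_byWitness[where f'="\<lambda>y. inv \<sigma> (inverse d * y * d)"])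
    show "\<forall>x\<in>UNIV. inv \<sigma> (inverse d * (rho d \<circ> \<sigma>) x * d) = x"
      using d ring_aut_inv_apply[OF \<sigma>] by (simp add: rho_def mult.assoc inverse_mult_cancel_left)
    show "\<forall>y\<in>UNIV. (rho d \<circ> \<sigma>) (inv \<sigma> (inverse d * y * d)) = y"
      using d ring_aut_apply_inv[OF \<sigma>] by (simp add: rho_def mult.assoc mult_inverse_cancel_left)
  qed auto
  moreover have "(rho d \<circ> \<sigma>) (x * y) = (rho d \<circ> \<sigma>) x * (rho d \<circ> \<sigma>) y" for x y
    using d by (simp add: rho_def ring_aut_mult[OF \<sigma>] mult.assoc inverse_mult_cancel_left)
  ultimately show ?thesis
    unfolding ring_aut_def by (simp add: rho_def ring_aut_add[OF \<sigma>] algebra_simps)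
qed

lemma cocycle2_ring_aut: "cocycle2 S m \<theta> \<alpha> \<xi> \<Longrightarrow> s \<in> S \<Longrightarrow> s \<noteq> \<theta> \<Longrightarrow> ring_aut (\<alpha> s)"
  unfolding cocycle2_def by blast

lemma cocycle2_nonzero: "cocycle2 S m \<theta> \<alpha> \<xi> \<Longrightarrow> s \<in> S \<Longrightarrow> t \<in> S \<Longrightarrow> m s t \<noteq> \<theta> \<Longrightarrow> \<xi> s t \<noteq> 0"
  unfolding cocycle2_def by blast

lemma cocycle2_identity:
  "cocycle2 S m \<theta> \<alpha> \<xi> \<Longrightarrow> s \<in> S \<Longrightarrow> t \<in> S \<Longrightarrow> u \<in> S \<Longrightarrow> m (m s t) u \<noteq> \<theta> \<Longrightarrow>
    \<alpha> s (\<xi> t u) * \<xi> s (m t u) = \<xi> s t * \<xi> (m s t) u"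
  unfolding cocycle2_def by blast

lemma cocycle2_comp: "cocycle2 S m \<theta> \<alpha> \<xi> \<Longrightarrow> s \<in> S \<Longrightarrow> t \<in> S \<Longrightarrow> m s t \<noteq> \<theta> \<Longrightarrow>
    \<alpha> s \<circ> \<alpha> t = rho (\<xi> s t) \<circ> \<alpha> (m s t)"
  unfolding cocycle2_def by blast

lemma cocycle2_comp_apply:
  assumes "cocycle2 S m \<theta> \<alpha> \<xi>" "s \<in> S" "t \<in> S" "m s t \<noteq> \<theta>"
  shows "\<alpha> s (\<alpha> t x) = \<xi> s t * \<alpha> (m s t) x * inverse (\<xi> s t)"
  using fun_cong[OF cocycle2_comp[OF assms], of x] by (simp add: rho_def)

lemma cocycle2_idempotent_aut:
  assumes "cocycle2 S m \<theta> \<alpha> \<xi>" "e \<in> S" "e \<noteq> \<theta>" "m e e = e"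
  shows "\<alpha> e x = \<xi> e e * x * inverse (\<xi> e e)"
  using cocycle2_comp_apply[OF assms(1,2,2), of "inv (\<alpha> e) x"] assms(3,4)
    ring_aut_apply_inv[OF cocycle2_ring_aut[OF assms(1-3)]] by simp

locale semigroup_zero =
  fixes S :: "'s set" and m :: "'s \<Rightarrow> 's \<Rightarrow> 's" and \<theta> :: 's
  assumes closed: "s \<in> S \<Longrightarrow> t \<in> S \<Longrightarrow> m s t \<in> S"
    and assoc: "s \<in> S \<Longrightarrow> t \<in> S \<Longrightarrow> u \<in> S \<Longrightarrow> m (m s t) u = m s (m t u)"
    and zero_mem: "\<theta> \<in> S"
    and zero_left: "s \<in> S \<Longrightarrow> m \<theta> s = \<theta>"
    and zero_right: "s \<in> S \<Longrightarrow> m s \<theta> = \<theta>"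
begin

lemma nonzero_prod_factors:
  assumes "s \<in> S" "t \<in> S" "m s t \<noteq> \<theta>" shows "s \<noteq> \<theta>" "t \<noteq> \<theta>"
  using assms zero_left zero_right by auto

lemma semigroup_aut_zero:
  assumes "semigroup_aut S m \<phi>" shows "\<phi> \<theta> = \<theta>"
proof -
  have b: "bij_betw \<phi> S S" and hom: "\<And>s t. s \<in> S \<Longrightarrow> t \<in> S \<Longrightarrow> \<phi> (m s t) = m (\<phi> s) (\<phi> t)"
    using assms unfolding semigroup_aut_def by auto
  obtain s where s: "s \<in> S" "\<phi> s = \<theta>" using b zero_mem by (metis bij_betw_iff_bijections)
  have "\<phi> \<theta> = \<phi> (m \<theta> s)" using zero_left[OF s(1)] by simp
  also have "\<dots> = m (\<phi> \<theta>) \<theta>" using hom[OF zero_mem s(1)] s(2) by simp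
  also have "\<dots> = \<theta>" using zero_right b zero_mem bij_betwE by metis
  finally show ?thesis .
qed

lemma semigroup_aut_bij_nonzero:
  assumes "semigroup_aut S m \<phi>" shows "bij_betw \<phi> (S - {\<theta>}) (S - {\<theta>})"
  using assms bij_betw_DiffI[of \<phi> S S "{\<theta>}" "{\<theta>}"] semigroup_aut_zero[OF assms] zero_mem
  unfolding semigroup_aut_def by simp

end

locale sf_semigroup =
  fixes S :: "'s set" and m :: "'s \<Rightarrow> 's \<Rightarrow> 's" and \<theta> :: 's and E :: "'s set"
  assumes square_free: "square_free_semigroup S m \<theta> E"
begin

lemma square_free_parts:
  shows "\<forall>s\<in>S. \<forall>t\<in>S. m s t \<in> S"
    and "\<forall>s\<in>S. \<forall>t\<in>S. \<forall>u\<in>S. m (m s t) u = m s (m t u)"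
    and "\<theta> \<in> S" and "\<forall>s\<in>S. m \<theta> s = \<theta> \<and> m s \<theta> = \<theta>"
    and "E \<subseteq> S" and "\<forall>e\<in>E. e \<noteq> \<theta> \<and> m e e = e"
    and "\<forall>e\<in>E. \<forall>f\<in>E. e \<noteq> f \<longrightarrow> m e f = \<theta>"
    and "S = (\<Union>e\<in>E. \<Union>f\<in>E. {m (m e x) f | x. x \<in> S})"
  using square_free unfolding square_free_semigroup_def by auto

end

sublocale sf_semigroup \<subseteq> semigroup_zero
  using square_free_parts(1-4) by unfold_locales blast+

context sf_semigroup
begin

lemma idempotent_mem: "e \<in> E \<Longrightarrow> e \<in> S"
  using square_free_parts(5) by blast

lemma idempotent_nonzero: "e \<in> E \<Longrightarrow> e \<noteq> \<theta>"
  using square_free_parts(6) by blast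

lemma idempotent: "e \<in> E \<Longrightarrow> m e e = e"
  using square_free_parts(6) by blast

lemma idempotents_orthogonal: "e \<in> E \<Longrightarrow> f \<in> E \<Longrightarrow> e \<noteq> f \<Longrightarrow> m e f = \<theta>"
  using square_free_parts(7) by blast

lemma local_units_exist:
  assumes "s \<in> S" obtains e f where "e \<in> E" "f \<in> E" "m e s = s" "m s f = s"
proof -
  obtain e f x where ef: "e \<in> E" "f \<in> E" and x: "x \<in> S" and s: "s = m (m e x) f"
    using assms square_free_parts(8) by blast
  have eS: "e \<in> S" and fS: "f \<in> S" using ef idempotent_mem by auto
  have "m e s = m (m (m e e) x) f"
    unfolding s using assoc[OF eS closed[OF eS x] fS] assoc[OF eS eS x] by simp
  moreover have "m s f = m (m e x) (m f f)"
    unfolding s using assoc[OF closed[OF eS x] fS fS] .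
  ultimately show thesis using that ef s idempotent by simp
qed

definition lunit :: "'s \<Rightarrow> 's" where
  "lunit s = (THE e. e \<in> E \<and> m e s = s)"

definition runit :: "'s \<Rightarrow> 's" where
  "runit s = (THE f. f \<in> E \<and> m s f = s)"

lemma left_unit_unique:
  assumes s: "s \<in> S" "s \<noteq> \<theta>" and e: "e \<in> E" "m e s = s" and e': "e' \<in> E" "m e' s = s"
  shows "e = e'"
proof (rule ccontr)
  assume "e \<noteq> e'"
  have "s = m (m e' e) s"
    using assoc[OF idempotent_mem[OF e'(1)] idempotent_mem[OF e(1)] s(1)] e(2) e'(2) by simp
  also have "\<dots> = \<theta>" using idempotents_orthogonal[OF e'(1) e(1)] \<open>e \<noteq> e'\<close> zero_left[OF s(1)] by simp
  finally show False using s(2) by simp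
qed

lemma right_unit_unique:
  assumes s: "s \<in> S" "s \<noteq> \<theta>" and f: "f \<in> E" "m s f = s" and f': "f' \<in> E" "m s f' = s"
  shows "f = f'"
proof (rule ccontr)
  assume "f \<noteq> f'"
  have "s = m s (m f f')"
    using assoc[OF s(1) idempotent_mem[OF f(1)] idempotent_mem[OF f'(1)]] f(2) f'(2) by simp
  also have "\<dots> = \<theta>" using idempotents_orthogonal[OF f(1) f'(1)] \<open>f \<noteq> f'\<close> zero_right[OF s(1)] by simp
  finally show False using s(2) by simp
qed

lemma lunit_eq:
  assumes "s \<in> S" "s \<noteq> \<theta>" "e \<in> E" "m e s = s" shows "lunit s = e"
  unfolding lunit_def using assms left_unit_unique by blast

lemma runit_eq:
  assumes "s \<in> S" "s \<noteq> \<theta>" "f \<in> E" "m s f = s" shows "runit s = f"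
  unfolding runit_def using assms right_unit_unique by blast

lemma lunit: assumes "s \<in> S" "s \<noteq> \<theta>" shows "lunit s \<in> E" "m (lunit s) s = s"
  using local_units_exist[OF assms(1)] lunit_eq[OF assms] by metis+

lemma runit: assumes "s \<in> S" "s \<noteq> \<theta>" shows "runit s \<in> E" "m s (runit s) = s"
  using local_units_exist[OF assms(1)] runit_eq[OF assms] by metis+

lemma lunit_runit_fix: "s \<in> S \<Longrightarrow> s \<noteq> \<theta> \<Longrightarrow> m (m (lunit s) s) (runit s) = s"
  using lunit runit by simp

lemma lunit_prod:
  assumes s: "s \<in> S" and t: "t \<in> S" and st: "m s t \<noteq> \<theta>"
  shows "lunit (m s t) = lunit s"
proof -
  have "s \<noteq> \<theta>" using nonzero_prod_factors[OF s t st] by simp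
  then show ?thesis
    using lunit_eq[OF closed[OF s t] st lunit(1)] lunit(2) assoc[OF idempotent_mem[OF lunit(1)] s t] s
    by metis
qed

lemma lunit_right_factor:
  assumes s: "s \<in> S" and t: "t \<in> S" and st: "m s t \<noteq> \<theta>"
  shows "lunit t = runit s"
proof (rule ccontr)
  have s0: "s \<noteq> \<theta>" and t0: "t \<noteq> \<theta>" using nonzero_prod_factors[OF s t st] by auto
  define f where "f = runit s"
  define f' where "f' = lunit t"
  have fE: "f \<in> E" and f'E: "f' \<in> E" using runit(1)[OF s s0] lunit(1)[OF t t0] by (auto simp: f_def f'_def)
  have fS: "f \<in> S" and f'S: "f' \<in> S" using fE f'E idempotent_mem by auto
  assume "lunit t \<noteq> runit s"
  then have "m f f' = \<theta>" using idempotents_orthogonal[OF fE f'E] by (auto simp: f_def f'_def)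
  have "m s t = m (m s f) (m f' t)" using runit(2)[OF s s0] lunit(2)[OF t t0] by (simp add: f_def f'_def)
  also have "\<dots> = m s (m (m f f') t)" using assoc s t fS f'S closed by metis
  also have "\<dots> = \<theta>" using \<open>m f f' = \<theta>\<close> zero_left[OF t] zero_right[OF s] by simp
  finally show False using st by simp
qed

end

lemma bij_betw_twisted_carrier:
  fixes F :: "'s \<Rightarrow> 'd::division_ring \<Rightarrow> 'd"
  assumes \<pi>: "bij_betw \<pi> (S - {\<theta>}) (S - {\<theta>})" and F: "\<And>u. u \<in> S - {\<theta>} \<Longrightarrow> bij (F u)"
  shows "bij_betw (\<lambda>x u. if u \<in> S - {\<theta>} then F u (x (\<pi> u)) else 0)
           (twisted_carrier S \<theta>) (twisted_carrier S \<theta>)"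
proof -
  define \<pi>' where "\<pi>' = inv_into (S - {\<theta>}) \<pi>"
  have \<pi>_mem: "\<pi> u \<in> S - {\<theta>}" and \<pi>'_\<pi>: "\<pi>' (\<pi> u) = u" if "u \<in> S - {\<theta>}" for u
    using that \<pi> bij_betwE bij_betw_inv_into_left unfolding \<pi>'_def by fastforce+
  have \<pi>'_mem: "\<pi>' w \<in> S - {\<theta>}" and \<pi>_\<pi>': "\<pi> (\<pi>' w) = w" if "w \<in> S - {\<theta>}" for w
    using that \<pi> bij_betwE[OF bij_betw_inv_into] bij_betw_inv_into_right unfolding \<pi>'_def by fastforce+
  have carrier: "x \<in> twisted_carrier S \<theta> \<longleftrightarrow> (\<forall>u. u \<notin> S - {\<theta>} \<longrightarrow> x u = 0)" for x :: "'s \<Rightarrow> 'd"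
    unfolding twisted_carrier_def by auto
  show ?thesis
  proof (rule bij_betw_byWitness[where f'="\<lambda>y w. if w \<in> S - {\<theta>} then inv (F (\<pi>' w)) (y (\<pi>' w)) else 0"])
    show "\<forall>x\<in>twisted_carrier S \<theta>. (\<lambda>w. if w \<in> S - {\<theta>} then inv (F (\<pi>' w))
            (if \<pi>' w \<in> S - {\<theta>} then F (\<pi>' w) (x (\<pi> (\<pi>' w))) else 0) else 0) = x"
      using \<pi>'_mem \<pi>_\<pi>' F by (auto simp: carrier bij_is_inj)
    show "\<forall>y\<in>twisted_carrier S \<theta>. (\<lambda>u. if u \<in> S - {\<theta>} then F u
            (if \<pi> u \<in> S - {\<theta>} then inv (F (\<pi>' (\<pi> u))) (y (\<pi>' (\<pi> u))) else 0) else 0) = y"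
      using \<pi>_mem \<pi>'_\<pi> F by (auto simp: carrier bij_is_surj surj_f_inv_f)
  qed (auto simp: carrier)
qed

lemma twisted_rings_iso_trans:
  assumes "twisted_rings_iso S m \<theta> \<beta> \<zeta> \<gamma> \<chi>" and "twisted_rings_iso S m \<theta> \<gamma> \<chi> \<alpha> \<xi>"
  shows "twisted_rings_iso S m \<theta> \<beta> \<zeta> \<alpha> \<xi>"
proof -
  obtain h where h: "bij_betw h (twisted_carrier S \<theta>) (twisted_carrier S \<theta>)"
    "\<forall>x\<in>twisted_carrier S \<theta>. \<forall>y\<in>twisted_carrier S \<theta>.
       h (twisted_add x y) = twisted_add (h x) (h y) \<and>
       h (twisted_mult S m \<theta> \<beta> \<zeta> x y) = twisted_mult S m \<theta> \<gamma> \<chi> (h x) (h y)"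
    using assms(1) unfolding twisted_rings_iso_def by blast
  obtain k where k: "bij_betw k (twisted_carrier S \<theta>) (twisted_carrier S \<theta>)"
    "\<forall>x\<in>twisted_carrier S \<theta>. \<forall>y\<in>twisted_carrier S \<theta>.
       k (twisted_add x y) = twisted_add (k x) (k y) \<and>
       k (twisted_mult S m \<theta> \<gamma> \<chi> x y) = twisted_mult S m \<theta> \<alpha> \<xi> (k x) (k y)"
    using assms(2) unfolding twisted_rings_iso_def by blast
  have "h x \<in> twisted_carrier S \<theta>" if "x \<in> twisted_carrier S \<theta>" for x
    using h(1) that bij_betwE by blast
  then show ?thesis
    unfolding twisted_rings_iso_def using bij_betw_trans[OF h(1) k(1)] h(2) k(2)
    by (intro exI[of _ "k \<circ> h"]) simp
qed

context sf_semigroup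
begin

lemma cohom_act_basis_product:
  assumes act: "cohom_act S m \<theta> E \<mu> \<eta> \<alpha> \<xi> \<beta> \<zeta>"
    and \<alpha>: "\<And>s. s \<in> S \<Longrightarrow> s \<noteq> \<theta> \<Longrightarrow> ring_aut (\<alpha> s)"
    and s: "s \<in> S" and t: "t \<in> S" and st: "m s t \<noteq> \<theta>"
  shows "\<mu> (lunit (m s t)) (a * \<beta> s b * \<zeta> s t) * \<eta> (m s t)
       = (\<mu> (lunit s) a * \<eta> s) * \<alpha> s (\<mu> (lunit t) b * \<eta> t) * (\<xi> s t :: 'd::division_ring)"
proof -
  have s0: "s \<noteq> \<theta>" and t0: "t \<noteq> \<theta>" using nonzero_prod_factors[OF s t st] by auto
  define e where "e = lunit s"
  define f where "f = lunit t"
  have e: "e \<in> E" and f: "f \<in> E" and g: "runit t \<in> E"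
    using lunit(1)[OF s s0] lunit(1)[OF t t0] runit(1)[OF t t0] by (auto simp: e_def f_def)
  have f_runit: "runit s = f" and e_prod: "lunit (m s t) = e"
    using lunit_right_factor[OF s t st] lunit_prod[OF s t st] by (auto simp: e_def f_def)
  have esf: "m (m e s) f = s" and ftg: "m (m f t) (runit t) = t"
    using lunit_runit_fix[OF s s0] lunit_runit_fix[OF t t0] f_runit by (auto simp: e_def f_def)
  have \<mu>e: "ring_aut (\<mu> e)" and \<mu>f: "ring_aut (\<mu> f)" and \<alpha>s: "ring_aut (\<alpha> s)"
    using act e f \<alpha>[OF s s0] unfolding cohom_act_def by auto
  have \<eta>s: "\<eta> s \<noteq> 0" and \<eta>st: "\<eta> (m s t) \<noteq> 0"
    using act s s0 closed[OF s t] st unfolding cohom_act_def by auto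
  have "(\<mu> e \<circ> \<beta> s \<circ> inv (\<mu> f)) (\<mu> f b) = (rho (\<eta> s) \<circ> \<alpha> s) (\<mu> f b)"
    using act s e f s0 esf unfolding cohom_act_def by metis
  then have \<beta>_conj: "\<mu> e (\<beta> s b) = \<eta> s * \<alpha> s (\<mu> f b) * inverse (\<eta> s)"
    using ring_aut_inv_apply[OF \<mu>f] by (simp add: rho_def)
  have \<zeta>_conj: "\<mu> e (\<zeta> s t) = \<eta> s * \<alpha> s (\<eta> t) * \<xi> s t * inverse (\<eta> (m s t))"
    using act s t e f g esf ftg s0 t0 st unfolding cohom_act_def by blast
  have "\<mu> (lunit (m s t)) (a * \<beta> s b * \<zeta> s t) * \<eta> (m s t)
      = \<mu> e a * (\<eta> s * \<alpha> s (\<mu> f b) * inverse (\<eta> s))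
          * (\<eta> s * \<alpha> s (\<eta> t) * \<xi> s t * inverse (\<eta> (m s t))) * \<eta> (m s t)"
    unfolding e_prod ring_aut_mult[OF \<mu>e] \<beta>_conj \<zeta>_conj ..
  also have "\<dots> = \<mu> e a * \<eta> s * (\<alpha> s (\<mu> f b) * \<alpha> s (\<eta> t)) * \<xi> s t"
    using \<eta>s \<eta>st by (simp add: mult.assoc inverse_mult_cancel_left)
  finally show ?thesis
    unfolding e_def f_def ring_aut_mult[OF \<alpha>s] .
qed

lemma twisted_rings_iso_of_cohom_act:
  fixes \<alpha> :: "'s \<Rightarrow> 'd::division_ring \<Rightarrow> 'd"
  assumes act: "cohom_act S m \<theta> E \<mu> \<eta> \<alpha> \<xi> \<beta> \<zeta>"
    and \<alpha>: "\<And>s. s \<in> S \<Longrightarrow> s \<noteq> \<theta> \<Longrightarrow> ring_aut (\<alpha> s)"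
  shows "twisted_rings_iso S m \<theta> \<beta> \<zeta> \<alpha> \<xi>"
proof -
  have \<mu>: "ring_aut (\<mu> (lunit u))" and \<eta>: "\<eta> u \<noteq> 0" if "u \<in> S - {\<theta>}" for u
    using act lunit(1) that unfolding cohom_act_def by auto
  define h where
    "h = (\<lambda>(x :: 's \<Rightarrow> 'd) u. if u \<in> S - {\<theta>} then \<mu> (lunit u) (x u) * \<eta> u else 0)"
  have "bij (\<lambda>d. \<mu> (lunit u) d * \<eta> u)" if "u \<in> S - {\<theta>}" for u
  proof (rule bij_betw_byWitness[where f'="\<lambda>d. inv (\<mu> (lunit u)) (d * inverse (\<eta> u))"])
    show "\<forall>d\<in>UNIV. inv (\<mu> (lunit u)) (\<mu> (lunit u) d * \<eta> u * inverse (\<eta> u)) = d"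
      using \<eta>[OF that] ring_aut_inv_apply[OF \<mu>[OF that]] by (simp add: mult.assoc)
    show "\<forall>d\<in>UNIV. \<mu> (lunit u) (inv (\<mu> (lunit u)) (d * inverse (\<eta> u))) * \<eta> u = d"
      using \<eta>[OF that] ring_aut_apply_inv[OF \<mu>[OF that]] by (simp add: mult.assoc)
  qed auto
  then have bij: "bij_betw h (twisted_carrier S \<theta>) (twisted_carrier S \<theta>)"
    unfolding h_def by (rule bij_betw_twisted_carrier[OF bij_betw_id, unfolded id_apply])
  have add: "h (twisted_add x y) = twisted_add (h x) (h y)" for x y
    unfolding h_def twisted_add_def by (rule ext) (simp add: ring_aut_add[OF \<mu>] distrib_right)
  have "h (twisted_mult S m \<theta> \<beta> \<zeta> x y) u = twisted_mult S m \<theta> \<alpha> \<xi> (h x) (h y) u" for x y u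
  proof (cases "u \<in> S - {\<theta>}")
    case u: True
    have "h (twisted_mult S m \<theta> \<beta> \<zeta> x y) u = (\<Sum>s\<in>S - {\<theta>}. \<Sum>t\<in>S - {\<theta>}.
        \<mu> (lunit u) (if m s t = u then x s * \<beta> s (y t) * \<zeta> s t else 0) * \<eta> u)"
      using u unfolding h_def twisted_mult_def by (simp add: ring_aut_sum[OF \<mu>[OF u]] sum_distrib_right)
    also have "\<dots> = (\<Sum>s\<in>S - {\<theta>}. \<Sum>t\<in>S - {\<theta>}.
        if m s t = u then h x s * \<alpha> s (h y t) * \<xi> s t else 0)"
      using u cohom_act_basis_product[OF act \<alpha>] ring_aut_zero[OF \<mu>[OF u]]
      by (intro sum.cong refl) (auto simp: h_def)
    also have "\<dots> = twisted_mult S m \<theta> \<alpha> \<xi> (h x) (h y) u"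
      using u unfolding twisted_mult_def by simp
    finally show ?thesis .
  qed (auto simp: h_def twisted_mult_def)
  then show ?thesis
    unfolding twisted_rings_iso_def using bij add by blast
qed

end

context semigroup_zero
begin

lemma twisted_rings_iso_relabel:
  fixes \<alpha> :: "'s \<Rightarrow> 'd::division_ring \<Rightarrow> 'd" and \<xi> :: "'s \<Rightarrow> 's \<Rightarrow> 'd"
  assumes \<phi>: "semigroup_aut S m \<phi>"
  shows "twisted_rings_iso S m \<theta> (\<lambda>s. \<alpha> (\<phi> s)) (\<lambda>s t. \<xi> (\<phi> s) (\<phi> t)) \<alpha> \<xi>"
proof -
  have \<phi>S: "bij_betw \<phi> (S - {\<theta>}) (S - {\<theta>})" using semigroup_aut_bij_nonzero[OF \<phi>] .
  have hom: "\<And>s t. s \<in> S \<Longrightarrow> t \<in> S \<Longrightarrow> \<phi> (m s t) = m (\<phi> s) (\<phi> t)"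
    using \<phi> unfolding semigroup_aut_def by blast
  define \<psi> where "\<psi> = inv_into (S - {\<theta>}) \<phi>"
  have \<psi>S: "bij_betw \<psi> (S - {\<theta>}) (S - {\<theta>})"
    unfolding \<psi>_def using bij_betw_inv_into[OF \<phi>S] .
  have \<psi>_\<phi>: "\<psi> (\<phi> s) = s" if "s \<in> S - {\<theta>}" for s
    using bij_betw_inv_into_left[OF \<phi>S that] unfolding \<psi>_def .
  have \<phi>_\<psi>: "\<phi> (\<psi> v) = v" if "v \<in> S - {\<theta>}" for v
    using bij_betw_inv_into_right[OF \<phi>S that] unfolding \<psi>_def .
  define h where "h = (\<lambda>(x :: 's \<Rightarrow> 'd) v. if v \<in> S - {\<theta>} then x (\<psi> v) else 0)"
  have bij: "bij_betw h (twisted_carrier S \<theta>) (twisted_carrier S \<theta>)"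
    using bij_betw_twisted_carrier[OF \<psi>S bij_id] unfolding h_def id_apply .
  have add: "h (twisted_add x y) = twisted_add (h x) (h y)" for x y
    unfolding h_def twisted_add_def by (rule ext) simp
  have h_\<phi>: "h x (\<phi> s) = x s" if "s \<in> S - {\<theta>}" for x s
    using that \<psi>_\<phi> bij_betwE[OF \<phi>S] unfolding h_def by simp
  have prod_eq_iff: "\<phi> (m s t) = v \<longleftrightarrow> m s t = \<psi> v" if "s \<in> S" "t \<in> S" "v \<in> S - {\<theta>}" for s t v
  proof
    assume "\<phi> (m s t) = v"
    then have "m s t \<in> S - {\<theta>}" using that closed semigroup_aut_zero[OF \<phi>] by auto
    then show "m s t = \<psi> v" using \<psi>_\<phi> \<open>\<phi> (m s t) = v\<close> by metis
  qed (use that \<phi>_\<psi> in simp)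
  have "h (twisted_mult S m \<theta> (\<lambda>s. \<alpha> (\<phi> s)) (\<lambda>s t. \<xi> (\<phi> s) (\<phi> t)) x y) v
      = twisted_mult S m \<theta> \<alpha> \<xi> (h x) (h y) v" for x y v
  proof (cases "v \<in> S - {\<theta>}")
    case v: True
    define G where "G s t = (if m s t = v then h x s * \<alpha> s (h y t) * \<xi> s t else 0)" for s t
    have "twisted_mult S m \<theta> \<alpha> \<xi> (h x) (h y) v = (\<Sum>s\<in>S - {\<theta>}. \<Sum>t\<in>S - {\<theta>}. G s t)"
      using v unfolding twisted_mult_def G_def by simp
    also have "\<dots> = (\<Sum>s\<in>S - {\<theta>}. \<Sum>t\<in>S - {\<theta>}. G (\<phi> s) (\<phi> t))"
      by (subst sum.reindex_bij_betw[OF \<phi>S, symmetric])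
        (intro sum.cong refl sum.reindex_bij_betw[OF \<phi>S, symmetric])
    also have "\<dots> = (\<Sum>s\<in>S - {\<theta>}. \<Sum>t\<in>S - {\<theta>}.
        if m s t = \<psi> v then x s * \<alpha> (\<phi> s) (y t) * \<xi> (\<phi> s) (\<phi> t) else 0)"
      using v h_\<phi> hom prod_eq_iff unfolding G_def by (intro sum.cong refl) auto
    also have "\<dots> = h (twisted_mult S m \<theta> (\<lambda>s. \<alpha> (\<phi> s)) (\<lambda>s t. \<xi> (\<phi> s) (\<phi> t)) x y) v"
      using v bij_betwE[OF \<psi>S] unfolding h_def twisted_mult_def by auto
    finally show ?thesis by simp
  qed (auto simp: h_def twisted_mult_def)
  then show ?thesis
    unfolding twisted_rings_iso_def using bij add by blast
qed

end

(* (twist_aut \<eta> \<alpha>, twist_cocycle m \<eta> \<alpha> \<xi>) is (1, \<eta>) * (\<alpha>, \<xi>) in the notation of the action. *)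
definition twist_aut :: "('s \<Rightarrow> 'd::division_ring) \<Rightarrow> ('s \<Rightarrow> 'd \<Rightarrow> 'd) \<Rightarrow> 's \<Rightarrow> 'd \<Rightarrow> 'd" where
  "twist_aut \<eta> \<alpha> s = rho (\<eta> s) \<circ> \<alpha> s"

definition twist_cocycle ::
  "('s \<Rightarrow> 's \<Rightarrow> 's) \<Rightarrow> ('s \<Rightarrow> 'd::division_ring) \<Rightarrow> ('s \<Rightarrow> 'd \<Rightarrow> 'd) \<Rightarrow> ('s \<Rightarrow> 's \<Rightarrow> 'd) \<Rightarrow> 's \<Rightarrow> 's \<Rightarrow> 'd" where
  "twist_cocycle m \<eta> \<alpha> \<xi> s t = \<eta> s * \<alpha> s (\<eta> t) * \<xi> s t * inverse (\<eta> (m s t))"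

lemma cohom_act_twist:
  assumes "\<And>s. s \<in> S \<Longrightarrow> s \<noteq> \<theta> \<Longrightarrow> \<eta> s \<noteq> 0"
  shows "cohom_act S m \<theta> E (\<lambda>_. id) \<eta> \<alpha> \<xi> (twist_aut \<eta> \<alpha>) (twist_cocycle m \<eta> \<alpha> \<xi>)"
  using assms unfolding cohom_act_def twist_aut_def twist_cocycle_def by (simp add: ring_aut_id)

context semigroup_zero
begin

lemma twist_cocycle_identity:
  fixes \<alpha> :: "'s \<Rightarrow> 'd::division_ring \<Rightarrow> 'd"
  assumes coc: "cocycle2 S m \<theta> \<alpha> \<xi>" and \<eta>: "\<And>s. \<eta> s \<noteq> 0"
    and s: "s \<in> S" and t: "t \<in> S" and u: "u \<in> S" and stu: "m (m s t) u \<noteq> \<theta>"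
  shows "twist_aut \<eta> \<alpha> s (twist_cocycle m \<eta> \<alpha> \<xi> t u) * twist_cocycle m \<eta> \<alpha> \<xi> s (m t u)
       = twist_cocycle m \<eta> \<alpha> \<xi> s t * twist_cocycle m \<eta> \<alpha> \<xi> (m s t) u"
proof -
  have st: "m s t \<noteq> \<theta>" using stu zero_left u by auto
  have \<alpha>s: "ring_aut (\<alpha> s)" using cocycle2_ring_aut[OF coc s] nonzero_prod_factors[OF s t st] by blast
  define a where "a = \<eta> s"
  define p where "p = \<eta> (m s t)"
  define q where "q = \<eta> (m t u)"
  define r where "r = \<eta> (m (m s t) u)"
  define X where "X = \<xi> s t"
  define Y where "Y = \<xi> (m s t) u"
  have a: "a \<noteq> 0" and p: "p \<noteq> 0" and X: "X \<noteq> 0" and \<alpha>q: "\<alpha> s q \<noteq> 0"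
    using \<eta> cocycle2_nonzero[OF coc s t st] ring_aut_eq_zero_iff[OF \<alpha>s]
    unfolding a_def p_def q_def X_def by auto
  have cocycle: "\<alpha> s (\<xi> t u) * (\<xi> s (m t u) * w) = X * (Y * w)" for w
    using cocycle2_identity[OF coc s t u stu] unfolding X_def Y_def by (simp add: mult.assoc[symmetric])
  have "twist_aut \<eta> \<alpha> s (twist_cocycle m \<eta> \<alpha> \<xi> t u) * twist_cocycle m \<eta> \<alpha> \<xi> s (m t u)
      = a * (\<alpha> s (\<eta> t) * \<alpha> s (\<alpha> t (\<eta> u)) * \<alpha> s (\<xi> t u) * inverse (\<alpha> s q)) * inverse a
          * (a * \<alpha> s q * \<xi> s (m t u) * inverse r)"
    unfolding twist_aut_def twist_cocycle_def a_def q_def r_def rho_def assoc[OF s t u]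
    by (simp add: ring_aut_mult[OF \<alpha>s] ring_aut_inverse[OF \<alpha>s])
  also have "\<dots> = a * \<alpha> s (\<eta> t) * (X * \<alpha> (m s t) (\<eta> u) * inverse X) * (X * (Y * inverse r))"
    using a \<alpha>q cocycle2_comp_apply[OF coc s t st] by (simp add: X_def mult.assoc inverse_mult_cancel_left cocycle)
  also have "\<dots> = (a * \<alpha> s (\<eta> t) * X * inverse p) * (p * \<alpha> (m s t) (\<eta> u) * Y * inverse r)"
    using X p by (simp add: mult.assoc inverse_mult_cancel_left)
  also have "\<dots> = twist_cocycle m \<eta> \<alpha> \<xi> s t * twist_cocycle m \<eta> \<alpha> \<xi> (m s t) u"
    unfolding twist_cocycle_def a_def p_def r_def X_def Y_def ..
  finally show ?thesis .
qed

lemma twist_aut_comp: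
  fixes \<alpha> :: "'s \<Rightarrow> 'd::division_ring \<Rightarrow> 'd"
  assumes coc: "cocycle2 S m \<theta> \<alpha> \<xi>" and \<eta>: "\<And>s. \<eta> s \<noteq> 0"
    and s: "s \<in> S" and t: "t \<in> S" and st: "m s t \<noteq> \<theta>"
  shows "twist_aut \<eta> \<alpha> s \<circ> twist_aut \<eta> \<alpha> t = rho (twist_cocycle m \<eta> \<alpha> \<xi> s t) \<circ> twist_aut \<eta> \<alpha> (m s t)"
proof
  fix x
  have \<alpha>s: "ring_aut (\<alpha> s)" using cocycle2_ring_aut[OF coc s] nonzero_prod_factors[OF s t st] by blast
  define a where "a = \<eta> s"
  define b where "b = \<alpha> s (\<eta> t)"
  define p where "p = \<eta> (m s t)"
  define X where "X = \<xi> s t"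
  have a: "a \<noteq> 0" and b: "b \<noteq> 0" and p: "p \<noteq> 0" and X: "X \<noteq> 0"
    using \<eta> cocycle2_nonzero[OF coc s t st] ring_aut_eq_zero_iff[OF \<alpha>s]
    unfolding a_def b_def p_def X_def by auto
  have "(twist_aut \<eta> \<alpha> s \<circ> twist_aut \<eta> \<alpha> t) x
      = a * (b * (X * \<alpha> (m s t) x * inverse X) * inverse b) * inverse a"
    unfolding twist_aut_def rho_def a_def b_def X_def
    by (simp add: ring_aut_mult[OF \<alpha>s] ring_aut_inverse[OF \<alpha>s] cocycle2_comp_apply[OF coc s t st])
  also have "\<dots> = (a * b * X * inverse p) * (p * \<alpha> (m s t) x * inverse p) * inverse (a * b * X * inverse p)"
    using a b p X by (simp add: nonzero_inverse_mult_distrib mult.assoc inverse_mult_cancel_left)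
  also have "\<dots> = (rho (twist_cocycle m \<eta> \<alpha> \<xi> s t) \<circ> twist_aut \<eta> \<alpha> (m s t)) x"
    unfolding twist_aut_def twist_cocycle_def rho_def a_def b_def p_def X_def by simp
  finally show "(twist_aut \<eta> \<alpha> s \<circ> twist_aut \<eta> \<alpha> t) x
      = (rho (twist_cocycle m \<eta> \<alpha> \<xi> s t) \<circ> twist_aut \<eta> \<alpha> (m s t)) x" .
qed

lemma cocycle2_twist:
  fixes \<alpha> :: "'s \<Rightarrow> 'd::division_ring \<Rightarrow> 'd"
  assumes coc: "cocycle2 S m \<theta> \<alpha> \<xi>" and \<eta>: "\<And>s. \<eta> s \<noteq> 0"
  shows "cocycle2 S m \<theta> (twist_aut \<eta> \<alpha>) (twist_cocycle m \<eta> \<alpha> \<xi>)"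
  unfolding cocycle2_def
proof (intro conjI ballI impI)
  fix s assume "s \<in> S" "s \<noteq> \<theta>"
  then show "ring_aut (twist_aut \<eta> \<alpha> s)"
    unfolding twist_aut_def using ring_aut_rho_comp cocycle2_ring_aut[OF coc] \<eta> by blast
next
  fix s t assume st: "s \<in> S" "t \<in> S" "m s t \<noteq> \<theta>"
  then have "ring_aut (\<alpha> s)" using cocycle2_ring_aut[OF coc] nonzero_prod_factors by blast
  then show "twist_cocycle m \<eta> \<alpha> \<xi> s t \<noteq> 0"
    unfolding twist_cocycle_def using \<eta> cocycle2_nonzero[OF coc st] ring_aut_eq_zero_iff by auto
next
  fix s t u assume "s \<in> S" "t \<in> S" "u \<in> S" "m (m s t) u \<noteq> \<theta>"
  then show "twist_aut \<eta> \<alpha> s (twist_cocycle m \<eta> \<alpha> \<xi> t u) * twist_cocycle m \<eta> \<alpha> \<xi> s (m t u)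
      = twist_cocycle m \<eta> \<alpha> \<xi> s t * twist_cocycle m \<eta> \<alpha> \<xi> (m s t) u"
    by (rule twist_cocycle_identity[OF coc \<eta>])
next
  fix s t assume "s \<in> S" "t \<in> S" "m s t \<noteq> \<theta>"
  then show "twist_aut \<eta> \<alpha> s \<circ> twist_aut \<eta> \<alpha> t = rho (twist_cocycle m \<eta> \<alpha> \<xi> s t) \<circ> twist_aut \<eta> \<alpha> (m s t)"
    by (rule twist_aut_comp[OF coc \<eta>])
qed

end

context sf_semigroup
begin

lemma normal_cocycle_twist:
  fixes \<alpha> :: "'s \<Rightarrow> 'd::division_ring \<Rightarrow> 'd"
  assumes coc: "cocycle2 S m \<theta> \<alpha> \<xi>"
    and \<eta>: "\<And>e. e \<in> E \<Longrightarrow> \<eta> e = inverse (\<xi> e e)"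
  shows "normal_cocycle E (twist_aut \<eta> \<alpha>) (twist_cocycle m \<eta> \<alpha> \<xi>)"
  unfolding normal_cocycle_def
proof (intro ballI conjI)
  fix e assume e: "e \<in> E"
  have eS: "e \<in> S" and e0: "e \<noteq> \<theta>" and ee: "m e e = e"
    using e idempotent_mem idempotent_nonzero idempotent by auto
  have k: "\<xi> e e \<noteq> 0" using cocycle2_nonzero[OF coc eS eS] ee e0 by simp
  note \<alpha>e = cocycle2_idempotent_aut[OF coc eS e0 ee]
  show "twist_aut \<eta> \<alpha> e = id"
    using k by (auto simp: twist_aut_def rho_def \<alpha>e \<eta>[OF e] mult.assoc inverse_mult_cancel_left)
  show "twist_cocycle m \<eta> \<alpha> \<xi> e e = 1"
    using k by (simp add: twist_cocycle_def ee \<alpha>e \<eta>[OF e] mult.assoc inverse_mult_cancel_left)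
qed

lemma normal_cocycle_iso_exists:
  fixes \<alpha> :: "'s \<Rightarrow> 'd::division_ring \<Rightarrow> 'd"
  assumes coc: "cocycle2 S m \<theta> \<alpha> \<xi>"
  shows "\<exists>\<beta> \<zeta>. cocycle2 S m \<theta> \<beta> \<zeta> \<and> normal_cocycle E \<beta> \<zeta> \<and> twisted_rings_iso S m \<theta> \<beta> \<zeta> \<alpha> \<xi>"
proof -
  define \<eta> where "\<eta> s = (if s \<in> E then inverse (\<xi> s s) else 1)" for s
  have \<eta>: "\<eta> s \<noteq> 0" for s
  proof (cases "s \<in> E")
    case True
    then have "\<xi> s s \<noteq> 0"
      using cocycle2_nonzero[OF coc idempotent_mem idempotent_mem] idempotent idempotent_nonzero by metis
    then show ?thesis using True unfolding \<eta>_def by simp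
  qed (simp add: \<eta>_def)
  have "cohom_act S m \<theta> E (\<lambda>_. id) \<eta> \<alpha> \<xi> (twist_aut \<eta> \<alpha>) (twist_cocycle m \<eta> \<alpha> \<xi>)"
    using \<eta> by (rule cohom_act_twist)
  then have "twisted_rings_iso S m \<theta> (twist_aut \<eta> \<alpha>) (twist_cocycle m \<eta> \<alpha> \<xi>) \<alpha> \<xi>"
    by (rule twisted_rings_iso_of_cohom_act[OF _ cocycle2_ring_aut[OF coc]])
  moreover have "normal_cocycle E (twist_aut \<eta> \<alpha>) (twist_cocycle m \<eta> \<alpha> \<xi>)"
    by (rule normal_cocycle_twist[OF coc]) (simp add: \<eta>_def)
  ultimately show ?thesis
    using cocycle2_twist[OF coc \<eta>] by (intro exI conjI)
qed

end

theorem mainTheorem1: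
  fixes S :: "'s set" and m :: "'s \<Rightarrow> 's \<Rightarrow> 's" and \<theta> :: 's and E :: "'s set"
    and \<alpha> \<beta> :: "'s \<Rightarrow> 'd::division_ring \<Rightarrow> 'd" and \<xi> \<zeta> :: "'s \<Rightarrow> 's \<Rightarrow> 'd"
  assumes sf: "square_free_semigroup S m \<theta> E"
    and c1: "cocycle2 S m \<theta> \<alpha> \<xi>"
    and c2: "cocycle2 S m \<theta> \<beta> \<zeta>"
  shows "(\<forall>\<phi>. semigroup_aut S m \<phi> \<and>
            thin_cohomologous S m \<theta> E \<beta> \<zeta> (\<lambda>s. \<alpha> (\<phi> s)) (\<lambda>s t. \<xi> (\<phi> s) (\<phi> t))
          \<longrightarrow> twisted_rings_iso S m \<theta> \<beta> \<zeta> \<alpha> \<xi>)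
       \<and> (\<exists>\<beta>' \<zeta>'. cocycle2 S m \<theta> \<beta>' \<zeta>' \<and> normal_cocycle E \<beta>' \<zeta>' \<and>
            twisted_rings_iso S m \<theta> \<beta>' \<zeta>' \<alpha> \<xi>)"
proof
  interpret sf_semigroup S m \<theta> E by (rule sf_semigroup.intro[OF sf])
  show "\<forall>\<phi>. semigroup_aut S m \<phi> \<and>
      thin_cohomologous S m \<theta> E \<beta> \<zeta> (\<lambda>s. \<alpha> (\<phi> s)) (\<lambda>s t. \<xi> (\<phi> s) (\<phi> t))
    \<longrightarrow> twisted_rings_iso S m \<theta> \<beta> \<zeta> \<alpha> \<xi>"
  proof (intro allI impI, elim conjE)
    fix \<phi> assume \<phi>: "semigroup_aut S m \<phi>"
      and "thin_cohomologous S m \<theta> E \<beta> \<zeta> (\<lambda>s. \<alpha> (\<phi> s)) (\<lambda>s t. \<xi> (\<phi> s) (\<phi> t))"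
    then obtain \<mu> \<eta> where act: "cohom_act S m \<theta> E \<mu> \<eta> (\<lambda>s. \<alpha> (\<phi> s)) (\<lambda>s t. \<xi> (\<phi> s) (\<phi> t)) \<beta> \<zeta>"
      unfolding thin_cohomologous_def by blast
    have "ring_aut (\<alpha> (\<phi> s))" if "s \<in> S" "s \<noteq> \<theta>" for s
      using cocycle2_ring_aut[OF c1] bij_betwE[OF semigroup_aut_bij_nonzero[OF \<phi>]] that by blast
    then have "twisted_rings_iso S m \<theta> \<beta> \<zeta> (\<lambda>s. \<alpha> (\<phi> s)) (\<lambda>s t. \<xi> (\<phi> s) (\<phi> t))"
      by (rule twisted_rings_iso_of_cohom_act[OF act])
    then show "twisted_rings_iso S m \<theta> \<beta> \<zeta> \<alpha> \<xi>"
      by (rule twisted_rings_iso_trans[OF _ twisted_rings_iso_relabel[OF \<phi>]])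
  qed
  show "\<exists>\<beta>' \<zeta>'. cocycle2 S m \<theta> \<beta>' \<zeta>' \<and> normal_cocycle E \<beta>' \<zeta>' \<and> twisted_rings_iso S m \<theta> \<beta>' \<zeta>' \<alpha> \<xi>"
    by (rule normal_cocycle_iso_exists[OF c1])
qed

end
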